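(* Let $(Z_i)_{i\ge1}$ be i.i.d. real random variables with $P(Z_1>x)\sim c\,e^{-\alpha x}$ as $x\to\infty$, for constants $c,\alpha>0$. Then there exists $\delta>0$, depending only on the law of $Z_1$, such that for every countable family $(x_i)$ of real numbers for which $Y:=\sup_i(x_i+Z_i)<\infty$ a.s., one has $\mathrm{conc}(\mathrm{dist}(Y),\delta)\le1-\delta$.
   Context: For a random variable $Y$ and $\delta>0$, $\mathrm{conc}(\mathrm{dist}(Y),\delta)=\sup_{a\in\mathbb R}P(a\le Y\le a+\delta)$. *)

theory Defs
  imports "HOL-Probability.Probability" "HOL-Library.Landau_Symbols"
begin

definition conc :: "real measure \<Rightarrow> real \<Rightarrow> real" where
  "conc mu d = (SUP a::real. measure mu {a..a + d})"

end

theory Submission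
  imports Defs
begin

text \<open>Let \<open>F\<close> be the common tail \<open>P(Z\<^sub>i > u)\<close>; an exponential tail satisfies
  \<open>F (u - 1) \<le> K F u\<close> for \<open>u \<ge> T\<close>. Fix \<open>[a, a + \<delta>]\<close> with \<open>\<delta> < 1\<close> and put
  \<open>t\<^sub>i = a + \<delta> - x\<^sub>i\<close>. If every finite partial sum of \<open>F (t\<^sub>i - 1)\<close> is at most
  \<open>1 - \<delta>\<close>, the union bound gives \<open>P(Y > a + \<delta> - 1) \<le> 1 - \<delta>\<close> (a strict inequality, since
  the supremum need not be attained). Otherwise some finite \<open>J\<close> has
  \<open>\<Sum>\<^sub>J F (t\<^sub>i - 1) > 1 - \<delta>\<close>, and independence gives
  \<open>P(Y \<le> a + \<delta>) \<le> \<Prod>\<^sub>J (1 - F t\<^sub>i)\<close>. Either some \<open>t\<^sub>i < T\<close>, and that factor alone is at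
  most \<open>1 - F T \<le> 1 - \<delta>\<close>; or all \<open>t\<^sub>i \<ge> T\<close>, so \<open>\<Sum>\<^sub>J F t\<^sub>i > (1 - \<delta>) / K\<close> and the
  product is at most \<open>exp (-(1 - \<delta>) / K) \<le> 1 - \<delta>\<close> once \<open>\<delta>\<close> is small.\<close>

lemma exp_tail_shift_bigo:
  fixes F :: "real \<Rightarrow> real"
  assumes "F \<sim>[at_top] (\<lambda>x. c * exp (- \<alpha> * x))"
  shows "(\<lambda>t. F (t - h)) \<in> O(F)"
proof -
  have "filterlim (\<lambda>t. t - h) at_top (at_top :: real filter)"
    using filterlim_tendsto_add_at_top[OF tendsto_const[of "- h"] filterlim_ident] by simp
  then have "(\<lambda>t. F (t - h)) \<sim>[at_top] (\<lambda>t. c * exp (- \<alpha> * (t - h)))"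
    by (rule asymp_equiv_compose'[OF assms])
  also have "(\<lambda>t. c * exp (- \<alpha> * (t - h))) = (\<lambda>t. exp (\<alpha> * h) * (c * exp (- \<alpha> * t)))"
    by (simp add: algebra_simps flip: exp_add)
  also have "\<dots> \<sim>[at_top] (\<lambda>t. exp (\<alpha> * h) * F t)"
    by (rule asymp_equiv_mult[OF asymp_equiv_refl asymp_equiv_symI[OF assms]])
  finally show ?thesis
    by (auto dest: asymp_equiv_imp_bigo)
qed

lemma exp_tail_shift_le:
  fixes F :: "real \<Rightarrow> real"
  assumes "F \<sim>[at_top] (\<lambda>x. c * exp (- \<alpha> * x))" "c > 0" "\<And>u. 0 \<le> F u"
  obtains K T where "K > 0" "0 < F T" "\<And>u. T \<le> u \<Longrightarrow> F (u - h) \<le> K * F u"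
proof -
  obtain K where K: "K > 0" "eventually (\<lambda>u. F (u - h) \<le> K * \<bar>F u\<bar>) at_top"
    by (rule landau_o.bigE_nonneg_real[OF exp_tail_shift_bigo[OF assms(1)]]) (use assms(3) in auto)
  have "eventually (\<lambda>u. 0 < F u) at_top"
    using asymp_equiv_eventually_pos_iff[OF assms(1)] by (rule eventually_mono) (use assms(2) in simp)
  with K(2) have "eventually (\<lambda>u. F (u - h) \<le> K * F u \<and> 0 < F u) at_top"
    by eventually_elim auto
  then obtain T where T: "\<And>u. T \<le> u \<Longrightarrow> F (u - h) \<le> K * F u \<and> 0 < F u"
    by (auto simp: eventually_at_top_linorder)
  show ?thesis
    by (rule that[OF K(1)]) (use T in auto)
qed

lemma real_of_ereal_SUP_le:
  fixes f :: "'i \<Rightarrow> real"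
  assumes "I \<noteq> {}" "\<And>i. i \<in> I \<Longrightarrow> f i \<le> s"
  shows "real_of_ereal (SUP i\<in>I. ereal (f i)) \<le> s"
proof -
  obtain i where "i \<in> I" using assms(1) by blast
  then have "ereal (f i) \<le> (SUP i\<in>I. ereal (f i))" by (rule SUP_upper)
  moreover have "(SUP i\<in>I. ereal (f i)) \<le> ereal s" using assms(2) by (auto intro!: SUP_least)
  ultimately show ?thesis by (cases "SUP i\<in>I. ereal (f i)") auto
qed

lemma le_real_of_ereal_SUP:
  fixes f :: "'i \<Rightarrow> real"
  assumes "(SUP i\<in>I. ereal (f i)) < \<infinity>" "i \<in> I"
  shows "f i \<le> real_of_ereal (SUP i\<in>I. ereal (f i))"
proof -
  have "ereal (f i) \<le> (SUP i\<in>I. ereal (f i))" using assms(2) by (rule SUP_upper)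
  with assms(1) show ?thesis by (cases "SUP i\<in>I. ereal (f i)") auto
qed

lemma prod_one_minus_le_exp_neg_sum:
  fixes p :: "'i \<Rightarrow> real"
  assumes "\<And>i. i \<in> J \<Longrightarrow> p i \<le> 1"
  shows "(\<Prod>i\<in>J. 1 - p i) \<le> exp (- (\<Sum>i\<in>J. p i))"
proof (cases "finite J")
  case True
  have "1 - p i \<le> exp (- p i)" for i
    using exp_ge_add_one_self[of "- p i"] by simp
  then have "(\<Prod>i\<in>J. 1 - p i) \<le> (\<Prod>i\<in>J. exp (- p i))"
    using assms by (intro prod_mono) auto
  also have "\<dots> = exp (- (\<Sum>i\<in>J. p i))"
    using exp_sum[OF True, of "\<lambda>i. - p i"] by (simp add: sum_negf)
  finally show ?thesis .
qed simp

lemma prod_one_minus_tail_le: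
  fixes F :: "real \<Rightarrow> real" and t :: "'i \<Rightarrow> real"
  assumes F: "antimono F" "\<And>u. 0 \<le> F u" "\<And>u. F u \<le> 1"
    and \<delta>: "\<delta> \<le> F T" "K > 0" "exp (- (1 - \<delta>) / K) \<le> 1 - \<delta>"
    and shift: "\<And>u. T \<le> u \<Longrightarrow> F (u - h) \<le> K * F u"
    and J: "finite J" "1 - \<delta> < (\<Sum>i\<in>J. F (t i - h))"
  shows "(\<Prod>i\<in>J. 1 - F (t i)) \<le> 1 - \<delta>"
proof (cases "\<exists>i\<in>J. t i < T")
  case True
  then obtain j where j: "j \<in> J" "t j < T" by blast
  have "(\<Prod>i\<in>J. 1 - F (t i)) = (1 - F (t j)) * (\<Prod>i\<in>J - {j}. 1 - F (t i))"
    using j(1) J(1) by (simp add: prod.remove)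
  also have "\<dots> \<le> 1 - F (t j)"
    using F(2,3) by (intro mult_left_le prod_le_1) auto
  also have "\<dots> \<le> 1 - \<delta>"
    using antimonoD[OF F(1), of "t j" T] j(2) \<delta>(1) by simp
  finally show ?thesis .
next
  case False
  have "1 - \<delta> < (\<Sum>i\<in>J. F (t i - h))" by (rule J(2))
  also have "\<dots> \<le> K * (\<Sum>i\<in>J. F (t i))"
    unfolding sum_distrib_left using False by (intro sum_mono shift) (simp add: not_less)
  finally have sum_ge: "(1 - \<delta>) / K \<le> (\<Sum>i\<in>J. F (t i))"
    using \<delta>(2) by (simp add: field_simps)
  have "(\<Prod>i\<in>J. 1 - F (t i)) \<le> exp (- (\<Sum>i\<in>J. F (t i)))"
    by (rule prod_one_minus_le_exp_neg_sum) (rule F(3))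
  also have "\<dots> \<le> exp (- (1 - \<delta>) / K)"
    using sum_ge \<delta>(2) by (simp add: field_simps)
  also have "\<dots> \<le> 1 - \<delta>" by (rule \<delta>(3))
  finally show ?thesis .
qed

lemma exists_delta_exp_le:
  fixes K p :: real
  assumes "K > 0" "p > 0"
  obtains \<delta> where "0 < \<delta>" "\<delta> \<le> p" "\<delta> < 1" "exp (- (1 - \<delta>) / K) \<le> 1 - \<delta>"
proof
  define \<delta> where "\<delta> = min (1/2) (min p (1 - exp (- 1 / (2 * K))))"
  have half: "\<delta> \<le> 1/2" and small: "\<delta> \<le> 1 - exp (- 1 / (2 * K))"
    unfolding \<delta>_def by (rule min.cobounded1, intro min.coboundedI2 min.cobounded2)
  show "0 < \<delta>" using assms by (simp add: \<delta>_def)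
  show "\<delta> \<le> p" unfolding \<delta>_def by (intro min.coboundedI2 min.cobounded1)
  show "\<delta> < 1" using half by simp
  have "exp (- (1 - \<delta>) / K) \<le> exp (- 1 / (2 * K))"
    using half assms(1) by (simp add: field_simps)
  then show "exp (- (1 - \<delta>) / K) \<le> 1 - \<delta>" using small by linarith
qed

lemma (in finite_measure) measure_UN_le_of_partial_sums:
  fixes A :: "nat \<Rightarrow> 'a set"
  assumes "\<And>i. i \<in> I \<Longrightarrow> A i \<in> sets M"
    and "\<And>J. finite J \<Longrightarrow> J \<subseteq> I \<Longrightarrow> (\<Sum>i\<in>J. measure M (A i)) \<le> b"
  shows "measure M (\<Union>i\<in>I. A i) \<le> b"
proof -
  define B where "B i = (if i \<in> I then A i else {})" for i
  have B: "range B \<subseteq> sets M" using assms(1) by (auto simp: B_def)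
  have partial: "(\<Sum>i<n. measure M (B i)) \<le> b" for n
  proof -
    have "(\<Sum>i<n. measure M (B i)) = (\<Sum>i\<in>{..<n} \<inter> I. measure M (A i))"
      by (simp add: B_def sum.inter_restrict if_distrib[of "measure M"] cong: if_cong)
    also have "\<dots> \<le> b" by (rule assms(2)) auto
    finally show ?thesis .
  qed
  have summable: "summable (\<lambda>i. measure M (B i))"
    by (rule summableI_nonneg_bounded[OF _ partial]) simp
  have "measure M (\<Union>i\<in>I. A i) = measure M (\<Union>i. B i)"
    by (rule arg_cong[where f = "measure M"]) (auto simp: B_def split: if_splits)
  also have "\<dots> \<le> (\<Sum>i. measure M (B i))"
    by (rule finite_measure_subadditive_countably[OF B summable])
  also have "\<dots> \<le> b" by (rule suminf_le_const[OF summable partial])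
  finally show ?thesis .
qed

lemma measure_distr_borel_eq:
  assumes "X \<in> borel_measurable M" "A \<in> sets borel"
  shows "measure (distr M borel X) A = measure M {\<omega>\<in>space M. X \<omega> \<in> A}"
  using assms by (subst measure_distr) (auto intro!: arg_cong[where f = "measure M"])

lemma measure_Collect_eq_if_distr_eq:
  assumes "X \<in> borel_measurable M" "Y \<in> borel_measurable M" "distr M borel X = distr M borel Y"
    and "A \<in> sets borel"
  shows "measure M {\<omega>\<in>space M. X \<omega> \<in> A} = measure M {\<omega>\<in>space M. Y \<omega> \<in> A}"
  using assms by (simp flip: measure_distr_borel_eq)

lemma (in prob_space) conc_distr_le:
  assumes "Y \<in> borel_measurable M" "\<And>a. prob {\<omega>\<in>space M. Y \<omega> \<in> {a..a + d}} \<le> b"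
  shows "conc (distr M borel Y) d \<le> b"
  unfolding conc_def using assms by (intro cSUP_least) (simp_all add: measure_distr_borel_eq)

lemma (in prob_space) antimono_prob_gt:
  fixes X :: "'a \<Rightarrow> real"
  assumes "X \<in> borel_measurable M"
  shows "antimono (\<lambda>u. prob {\<omega>\<in>space M. u < X \<omega>})"
proof -
  have "{\<omega>\<in>space M. u < X \<omega>} \<in> events" for u
    using assms by measurable
  then show ?thesis
    by (intro antimonoI finite_measure_mono) auto
qed

lemma (in prob_space) prob_shift_tail:
  fixes X :: "'a \<Rightarrow> real"
  assumes X: "X \<in> borel_measurable M" and tail: "\<And>u. prob {\<omega>\<in>space M. u < X \<omega>} = F u"
  shows prob_shift_gt: "prob {\<omega>\<in>space M. s < c + X \<omega>} = F (s - c)"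
    and prob_shift_le: "prob {\<omega>\<in>space M. c + X \<omega> \<le> s} = 1 - F (s - c)"
proof -
  have "prob {\<omega>\<in>space M. s < c + X \<omega>} = prob {\<omega>\<in>space M. s - c < X \<omega>}"
    by (intro arg_cong[where f = prob]) auto
  then show gt: "prob {\<omega>\<in>space M. s < c + X \<omega>} = F (s - c)"
    by (simp only: tail)
  have "{\<omega>\<in>space M. s < c + X \<omega>} \<in> events"
    using X by measurable
  then show "prob {\<omega>\<in>space M. c + X \<omega> \<le> s} = 1 - F (s - c)"
    using prob_neg[of "\<lambda>\<omega>. s < c + X \<omega>"] by (simp add: not_less gt)
qed

lemma (in prob_space) prob_sup_gt_le_partial_sums:
  fixes Z :: "nat \<Rightarrow> 'a \<Rightarrow> real"
  assumes "\<And>i. Z i \<in> borel_measurable M" and "I \<noteq> {}"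
    and "\<And>J. finite J \<Longrightarrow> J \<subseteq> I \<Longrightarrow> (\<Sum>i\<in>J. prob {\<omega>\<in>space M. s < x i + Z i \<omega>}) \<le> b"
  shows "prob {\<omega>\<in>space M. s < real_of_ereal (SUP i\<in>I. ereal (x i + Z i \<omega>))} \<le> b"
proof -
  have "prob {\<omega>\<in>space M. s < real_of_ereal (SUP i\<in>I. ereal (x i + Z i \<omega>))}
      \<le> prob (\<Union>i\<in>I. {\<omega>\<in>space M. s < x i + Z i \<omega>})"
  proof (rule finite_measure_mono)
    show "{\<omega>\<in>space M. s < real_of_ereal (SUP i\<in>I. ereal (x i + Z i \<omega>))}
        \<subseteq> (\<Union>i\<in>I. {\<omega>\<in>space M. s < x i + Z i \<omega>})"
      using real_of_ereal_SUP_le[OF assms(2)] by (force simp: not_less[symmetric])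
    show "(\<Union>i\<in>I. {\<omega>\<in>space M. s < x i + Z i \<omega>}) \<in> events"
      using assms(1) by measurable
  qed
  also have "\<dots> \<le> b"
    using assms(1) by (intro measure_UN_le_of_partial_sums assms(3)) measurable
  finally show ?thesis .
qed

lemma (in prob_space) prob_sup_le_le_prod:
  fixes Z :: "nat \<Rightarrow> 'a \<Rightarrow> real"
  assumes Z: "\<And>i. Z i \<in> borel_measurable M" and indep: "indep_vars (\<lambda>_. borel) Z UNIV"
    and J: "finite J" "J \<subseteq> I"
    and finite_sup: "AE \<omega> in M. (SUP i\<in>I. ereal (x i + Z i \<omega>)) < \<infinity>"
  shows "prob {\<omega>\<in>space M. real_of_ereal (SUP i\<in>I. ereal (x i + Z i \<omega>)) \<le> b}
    \<le> (\<Prod>i\<in>J. prob {\<omega>\<in>space M. x i + Z i \<omega> \<le> b})"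
proof (cases "J = {}")
  case False
  have "prob {\<omega>\<in>space M. real_of_ereal (SUP i\<in>I. ereal (x i + Z i \<omega>)) \<le> b}
      \<le> prob (\<Inter>i\<in>J. Z i -` {..b - x i} \<inter> space M)"
  proof (rule finite_measure_mono_AE)
    show "AE \<omega> in M. \<omega> \<in> {\<omega>\<in>space M. real_of_ereal (SUP i\<in>I. ereal (x i + Z i \<omega>)) \<le> b}
        \<longrightarrow> \<omega> \<in> (\<Inter>i\<in>J. Z i -` {..b - x i} \<inter> space M)"
      using finite_sup
    proof eventually_elim
      case (elim \<omega>)
      then show ?case
        using le_real_of_ereal_SUP[OF elim] J(2) False by fastforce
    qed
    show "(\<Inter>i\<in>J. Z i -` {..b - x i} \<inter> space M) \<in> events"
      using Z False J(1) by measurable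
  qed
  also have "\<dots> = (\<Prod>i\<in>J. prob (Z i -` {..b - x i} \<inter> space M))"
    using False J(1) by (intro indep_varsD[OF indep]) auto
  also have "\<dots> = (\<Prod>i\<in>J. prob {\<omega>\<in>space M. x i + Z i \<omega> \<le> b})"
    by (intro prod.cong arg_cong[where f = prob]) auto
  finally show ?thesis .
qed simp

lemma (in prob_space) prob_sup_in_interval_le:
  fixes Z :: "nat \<Rightarrow> 'a \<Rightarrow> real" and F :: "real \<Rightarrow> real"
  assumes Z: "\<And>i. Z i \<in> borel_measurable M" and indep: "indep_vars (\<lambda>_. borel) Z UNIV"
    and tail: "\<And>i u. prob {\<omega>\<in>space M. u < Z i \<omega>} = F u"
    and I: "I \<noteq> {}" and finite_sup: "AE \<omega> in M. (SUP i\<in>I. ereal (x i + Z i \<omega>)) < \<infinity>"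
    and \<delta>: "\<delta> \<le> F T" "\<delta> < h" "K > 0" "exp (- (1 - \<delta>) / K) \<le> 1 - \<delta>"
    and shift: "\<And>u. T \<le> u \<Longrightarrow> F (u - h) \<le> K * F u"
  shows "prob {\<omega>\<in>space M. real_of_ereal (SUP i\<in>I. ereal (x i + Z i \<omega>)) \<in> {a..a + \<delta>}}
    \<le> 1 - \<delta>"
proof -
  let ?Y = "\<lambda>\<omega>. real_of_ereal (SUP i\<in>I. ereal (x i + Z i \<omega>))"
  have Y: "?Y \<in> borel_measurable M"
    using Z by measurable
  have F_eq: "F = (\<lambda>u. prob {\<omega>\<in>space M. u < Z 0 \<omega>})"
    by (simp add: tail)
  have F: "antimono F" "0 \<le> F u" "F u \<le> 1" for u
    unfolding F_eq using antimono_prob_gt[OF Z] by simp_all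
  define t where "t i = a + \<delta> - x i" for i
  show ?thesis
  proof (cases "\<forall>J. finite J \<and> J \<subseteq> I \<longrightarrow> (\<Sum>i\<in>J. F (t i - h)) \<le> 1 - \<delta>")
    case True
    have "prob {\<omega>\<in>space M. ?Y \<omega> \<in> {a..a + \<delta>}} \<le> prob {\<omega>\<in>space M. a + \<delta> - h < ?Y \<omega>}"
      using Y \<delta>(2) by (intro finite_measure_mono) auto
    also have "\<dots> \<le> 1 - \<delta>"
    proof (rule prob_sup_gt_le_partial_sums[OF Z I])
      fix J assume "finite J" "J \<subseteq> I"
      moreover have "(\<Sum>i\<in>J. prob {\<omega>\<in>space M. a + \<delta> - h < x i + Z i \<omega>}) = (\<Sum>i\<in>J. F (t i - h))"
        unfolding prob_shift_gt[OF Z tail] t_def by (simp add: algebra_simps)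
      ultimately show "(\<Sum>i\<in>J. prob {\<omega>\<in>space M. a + \<delta> - h < x i + Z i \<omega>}) \<le> 1 - \<delta>"
        using True by simp
    qed
    finally show ?thesis .
  next
    case False
    then obtain J where J: "finite J" "J \<subseteq> I" "1 - \<delta> < (\<Sum>i\<in>J. F (t i - h))"
      by auto
    have "prob {\<omega>\<in>space M. ?Y \<omega> \<in> {a..a + \<delta>}} \<le> prob {\<omega>\<in>space M. ?Y \<omega> \<le> a + \<delta>}"
      using Y by (intro finite_measure_mono) auto
    also have "\<dots> \<le> (\<Prod>i\<in>J. prob {\<omega>\<in>space M. x i + Z i \<omega> \<le> a + \<delta>})"
      by (rule prob_sup_le_le_prod[OF Z indep J(1,2) finite_sup])
    also have "\<dots> = (\<Prod>i\<in>J. 1 - F (t i))"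
      by (simp add: prob_shift_le[OF Z tail] t_def)
    also have "\<dots> \<le> 1 - \<delta>"
      by (rule prod_one_minus_tail_le[OF F \<delta>(1,3,4) shift J(1,3)])
    finally show ?thesis .
  qed
qed

theorem lemma27:
  fixes M :: "'a measure" and Z :: "nat \<Rightarrow> 'a \<Rightarrow> real" and c \<alpha> :: real
  assumes "prob_space M"
    and "\<And>i. Z i \<in> borel_measurable M"
    and "prob_space.indep_vars M (\<lambda>_. borel) Z UNIV"
    and "\<And>i. distr M borel (Z i) = distr M borel (Z 0)"
    and "c > 0" and "\<alpha> > 0"
    and "(\<lambda>x. measure M {\<omega> \<in> space M. Z 0 \<omega> > x}) \<sim>[at_top] (\<lambda>x. c * exp (- \<alpha> * x))"
  shows "\<exists>\<delta>>0. \<forall>(I :: nat set) (x :: nat \<Rightarrow> real).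
           I \<noteq> {} \<longrightarrow>
           (AE \<omega> in M. (SUP i\<in>I. ereal (x i + Z i \<omega>)) < \<infinity>) \<longrightarrow>
           conc (distr M borel (\<lambda>\<omega>. real_of_ereal (SUP i\<in>I. ereal (x i + Z i \<omega>)))) \<delta> \<le> 1 - \<delta>"
proof -
  interpret prob_space M by (rule assms(1))
  define F where "F u = prob {\<omega>\<in>space M. u < Z 0 \<omega>}" for u
  have tail: "prob {\<omega>\<in>space M. u < Z i \<omega>} = F u" for i u
    using measure_Collect_eq_if_distr_eq[OF assms(2,2,4), where A = "{u<..}"] by (simp add: F_def)
  have "F \<sim>[at_top] (\<lambda>u. c * exp (- \<alpha> * u))"
    using assms(7) by (simp add: F_def[abs_def])
  then obtain K T where K: "K > 0" and T: "0 < F T" and shift: "\<And>u. T \<le> u \<Longrightarrow> F (u - 1) \<le> K * F u"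
    by (rule exp_tail_shift_le) (use assms(5) in \<open>auto simp: F_def\<close>)
  obtain \<delta> where \<delta>: "0 < \<delta>" "\<delta> \<le> F T" "\<delta> < 1" "exp (- (1 - \<delta>) / K) \<le> 1 - \<delta>"
    using exists_delta_exp_le[OF K T] by blast
  show ?thesis
  proof (intro exI[of _ \<delta>] conjI allI impI \<delta>(1))
    fix I :: "nat set" and x :: "nat \<Rightarrow> real"
    assume I: "I \<noteq> {}" and finite_sup: "AE \<omega> in M. (SUP i\<in>I. ereal (x i + Z i \<omega>)) < \<infinity>"
    show "conc (distr M borel (\<lambda>\<omega>. real_of_ereal (SUP i\<in>I. ereal (x i + Z i \<omega>)))) \<delta> \<le> 1 - \<delta>"
      using assms(2)
      by (intro conc_distr_le prob_sup_in_interval_le[where F = F, OF assms(2,3) tail I finite_sup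
          \<delta>(2,3) K \<delta>(4) shift]) measurable
  qed
qed

end
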